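(* Let $G$ be a finite group and $p$ a prime. The power graph $P(G)$ contains no induced subgraph isomorphic to the path $P_4$ on four vertices, nor to the $4$-cycle $C_4$, whose four vertices are all elements of $G$ whose orders are powers of $p$.
   Context: The power graph $P(G)$ of a group $G$ has vertex set $G$, with distinct $u,v$ adjacent if and only if $u=v^i$ or $v=u^j$ for some integers $i,j$. *)

theory Defs
  imports "HOL-Algebra.Algebra"
begin

definition power_adj :: "('a, 'b) monoid_scheme \<Rightarrow> 'a \<Rightarrow> 'a \<Rightarrow> bool" where
  "power_adj G u v \<longleftrightarrow> u \<in> carrier G \<and> v \<in> carrier G \<and> u \<noteq> v \<and>
     ((\<exists>i::int. u = v [^]\<^bsub>G\<^esub> i) \<or> (\<exists>j::int. v = u [^]\<^bsub>G\<^esub> j))"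

definition induces_P4 :: "('a, 'b) monoid_scheme \<Rightarrow> 'a \<Rightarrow> 'a \<Rightarrow> 'a \<Rightarrow> 'a \<Rightarrow> bool" where
  "induces_P4 G a b c d \<longleftrightarrow> distinct [a, b, c, d] \<and>
     power_adj G a b \<and> power_adj G b c \<and> power_adj G c d \<and>
     \<not> power_adj G a c \<and> \<not> power_adj G b d \<and> \<not> power_adj G a d"

definition induces_C4 :: "('a, 'b) monoid_scheme \<Rightarrow> 'a \<Rightarrow> 'a \<Rightarrow> 'a \<Rightarrow> 'a \<Rightarrow> bool" where
  "induces_C4 G a b c d \<longleftrightarrow> distinct [a, b, c, d] \<and>
     power_adj G a b \<and> power_adj G b c \<and> power_adj G c d \<and> power_adj G d a \<and>
     \<not> power_adj G a c \<and> \<not> power_adj G b d"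

definition p_elem :: "('a, 'b) monoid_scheme \<Rightarrow> nat \<Rightarrow> 'a \<Rightarrow> bool" where
  "p_elem G p x \<longleftrightarrow> x \<in> carrier G \<and> (\<exists>k::nat. group.ord G x = p ^ k)"

end

theory Submission
  imports Defs "HOL-Computational_Algebra.Primes"
begin

text \<open>Restricted to elements of p-power order, "is a power of" is a preorder in which the
  elements below any given z, being powers of z, are pairwise comparable: the cyclic group
  generated by z has order p^k, and its subgroups form a chain. The power graph on such
  elements is the comparability graph of this preorder, and a comparability graph whose
  down-sets are chains contains no induced P4 or C4: along a path a-b-c-d, whichever way
  the middle edge points, two non-adjacent vertices end up comparable.\<close>

definition power_of :: "('a, 'b) monoid_scheme \<Rightarrow> 'a \<Rightarrow> 'a \<Rightarrow> bool" where
  "power_of G x y \<longleftrightarrow> (\<exists>i::int. x = y [^]\<^bsub>G\<^esub> i)"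

lemma dvd_prime_power_linear:
  fixes p a b :: nat
  assumes "Factorial_Ring.prime p" and "a dvd p ^ k" and "b dvd p ^ k"
  shows "a dvd b \<or> b dvd a"
proof -
  obtain m n where "a = p ^ m" "b = p ^ n"
    using assms divides_primepow_nat by metis
  then show ?thesis
    by (cases "m \<le> n") (simp_all add: le_imp_power_dvd)
qed

lemma (in group) power_of_trans:
  assumes "power_of G x y" and "power_of G y z" and "z \<in> carrier G"
  shows "power_of G x z"
  using assms by (auto simp: power_of_def int_pow_pow)

lemma (in group) int_pow_power_of_int_pow:
  assumes z: "z \<in> carrier G" and dvd: "gcd i (int (ord z)) dvd j"
  shows "power_of G (z [^] j) (z [^] i)"
proof -
  obtain u v where uv: "u * i + v * int (ord z) = gcd i (int (ord z))"
    using bezout_int by blast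
  obtain m where m: "j = gcd i (int (ord z)) * m" using dvd by blast
  have j: "j = i * (u * m) + int (ord z) * (v * m)"
    using m by (simp add: algebra_simps flip: uv)
  have "z [^] j = z [^] (i * (u * m)) \<otimes> z [^] (int (ord z) * (v * m))"
    using j z int_pow_mult by simp
  also have "\<dots> = (z [^] i) [^] (u * m)"
    using z int_pow_eq_id int_pow_pow by simp
  finally show ?thesis unfolding power_of_def by blast
qed

lemma (in group) powers_of_prime_power_order_comparable:
  assumes z: "z \<in> carrier G" and ord: "ord z = p ^ k" and p: "Factorial_Ring.prime p"
    and x: "power_of G x z" and y: "power_of G y z"
  shows "power_of G x y \<or> power_of G y x"
proof -
  obtain i j :: int where ij: "x = z [^] i" "y = z [^] j"
    using x y unfolding power_of_def by blast
  let ?g = "\<lambda>i. gcd i (int (ord z))"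
  have "nat (?g i) dvd p ^ k" "nat (?g j) dvd p ^ k"
    using ord by (metis gcd_dvd2 gcd_ge_0_int int_dvd_int_iff nat_0_le)+
  then have "nat (?g i) dvd nat (?g j) \<or> nat (?g j) dvd nat (?g i)"
    using p dvd_prime_power_linear by blast
  then have "?g i dvd ?g j \<or> ?g j dvd ?g i"
    by (metis gcd_ge_0_int int_dvd_int_iff nat_0_le)
  then have "?g i dvd j \<or> ?g j dvd i"
    by (meson dvd_trans gcd_dvd1)
  then show ?thesis
    using int_pow_power_of_int_pow[OF z] ij by blast
qed

lemma comparability_graph_no_induced_P4_C4:
  fixes R :: "'a \<Rightarrow> 'a \<Rightarrow> bool"
  assumes trans: "\<And>x y z. R x y \<Longrightarrow> R y z \<Longrightarrow> R x z"
    and down_chain: "\<And>x y z. R x z \<Longrightarrow> R y z \<Longrightarrow> R x y \<or> R y x"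
  shows "\<not> ((R a b \<or> R b a) \<and> (R b c \<or> R c b) \<and> (R c d \<or> R d c)
           \<and> \<not> (R a c \<or> R c a) \<and> \<not> (R b d \<or> R d b) \<and> \<not> (R a d \<or> R d a))"
    and "\<not> ((R a b \<or> R b a) \<and> (R b c \<or> R c b) \<and> (R c d \<or> R d c) \<and> (R d a \<or> R a d)
           \<and> \<not> (R a c \<or> R c a) \<and> \<not> (R b d \<or> R d b))"
  using trans down_chain by metis+

theorem mainTheorem4:
  fixes G (structure) and p :: nat
  assumes "group G" and "finite (carrier G)" and "Factorial_Ring.prime p"
  shows "\<not> (\<exists>a b c d. p_elem G p a \<and> p_elem G p b \<and> p_elem G p c \<and> p_elem G p d \<and>
              (induces_P4 G a b c d \<or> induces_C4 G a b c d))"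
proof
  interpret group G by fact
  assume "\<exists>a b c d. p_elem G p a \<and> p_elem G p b \<and> p_elem G p c \<and> p_elem G p d \<and>
              (induces_P4 G a b c d \<or> induces_C4 G a b c d)"
  then obtain a b c d where elems: "p_elem G p a" "p_elem G p b" "p_elem G p c" "p_elem G p d"
    and induced: "induces_P4 G a b c d \<or> induces_C4 G a b c d" by blast
  define R where "R x y \<longleftrightarrow> x \<in> {a, b, c, d} \<and> y \<in> {a, b, c, d} \<and> power_of G x y" for x y
  have p_elem: "p_elem G p x" if "x \<in> {a, b, c, d}" for x
    using that elems by auto
  have "R x z" if "R x y" "R y z" for x y z
    using that p_elem power_of_trans unfolding R_def p_elem_def by blast
  moreover have "R x y \<or> R y x" if "R x z" "R y z" for x y z
    using that p_elem powers_of_prime_power_order_comparable[OF _ _ assms(3)]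
    unfolding R_def p_elem_def by metis
  moreover have "power_adj G x y \<longleftrightarrow> x \<noteq> y \<and> (R x y \<or> R y x)"
    if "x \<in> {a, b, c, d}" "y \<in> {a, b, c, d}" for x y
    using that p_elem unfolding power_adj_def R_def power_of_def p_elem_def by blast
  ultimately show False
    using induced comparability_graph_no_induced_P4_C4[of R a b c d]
    unfolding induces_P4_def induces_C4_def by auto
qed

end
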